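(* Let $\mathcal{G}$ (the Galilei group) be the group of transformations of $\mathbb{R}^4=\mathbb{R}^3\times\mathbb{R}$ of the form $x\mapsto \begin{pmatrix} S & w\\ 0^T & 1\end{pmatrix}x+b$ with $S\in SO(3)$, $w\in\mathbb{R}^3$, $b\in\mathbb{R}^4$. Then the nontrivial $\mathcal{G}$-invariant equivalence relations on $\mathbb{R}^4$ are exactly the relations $\sim_H$, where $H$ ranges over the proper additive subgroups of $\mathbb{R}$, whose equivalence classes are $[x]_H=x+(\mathbb{R}^3\times H)$.
   Context: An equivalence relation $\sim$ on $\mathbb{R}^4$ is $\mathcal{G}$-invariant if $x\sim y$ implies $g(x)\sim g(y)$ for all $x,y$ and $g\in\mathcal{G}$. It is trivial if it is the total relation $\mathbb{R}^4\times\mathbb{R}^4$ or the identity relation (diagonal). *)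

theory Defs
  imports "HOL-Analysis.Analysis"
begin

definition SO3 :: "(real^3^3) set" where
  "SO3 = {S. orthogonal_matrix S \<and> det S = 1}"

text \<open>The affine map x |-> [[S, w],[0^T, 1]] x + b, written blockwise.\<close>
definition galilei_map :: "real^3^3 \<Rightarrow> real^3 \<Rightarrow> ((real^3) \<times> real) \<Rightarrow> ((real^3) \<times> real) \<Rightarrow> ((real^3) \<times> real)" where
  "galilei_map S w b x = (S *v fst x + snd x *\<^sub>R w, snd x) + b"

definition galilei_group :: "(((real^3) \<times> real) \<Rightarrow> ((real^3) \<times> real)) set" where
  "galilei_group = {galilei_map S w b | S w b. S \<in> SO3}"

definition invariant_rel :: "('a \<Rightarrow> 'a) set \<Rightarrow> ('a \<times> 'a) set \<Rightarrow> bool" where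
  "invariant_rel G r \<longleftrightarrow> (\<forall>x y g. (x, y) \<in> r \<longrightarrow> g \<in> G \<longrightarrow> (g x, g y) \<in> r)"

definition trivial_rel :: "('a \<times> 'a) set \<Rightarrow> bool" where
  "trivial_rel r \<longleftrightarrow> r = UNIV \<or> r = Id"

definition additive_subgroup :: "real set \<Rightarrow> bool" where
  "additive_subgroup H \<longleftrightarrow> 0 \<in> H \<and> (\<forall>a\<in>H. \<forall>b\<in>H. a + b \<in> H) \<and> (\<forall>a\<in>H. - a \<in> H)"

definition rel_H :: "real set \<Rightarrow> (((real^3) \<times> real) \<times> ((real^3) \<times> real)) set" where
  "rel_H H = {(x, y). y \<in> (\<lambda>h. x + h) ` (UNIV \<times> H)}"

end

theory Submission
  imports Defs
begin

text \<open>
  Since translations lie in the Galilei group, an invariant equivalence relation \<open>r\<close> is the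
  coset relation of the additive subgroup \<open>K = r `` {0}\<close>, and \<open>K\<close> is stable under the linear
  maps \<open>(u, t) \<mapsto> (S u + t w, t)\<close>. If \<open>r \<noteq> Id\<close>, \<open>K\<close> has a nonzero element \<open>(u, t)\<close> and then
  contains \<open>\<real>\<^sup>3 \<times> {0}\<close>: for \<open>t \<noteq> 0\<close> a boost shifts \<open>u\<close> arbitrarily; for \<open>t = 0\<close> rotations give
  every vector of norm \<open>norm u\<close>, their differences give every vector of norm at most \<open>2 norm u\<close>,
  and multiples give everything. Hence \<open>K = \<real>\<^sup>3 \<times> H\<close>.
\<close>

context
  fixes r :: "('a::ab_group_add \<times> 'a) set"
  assumes equiv_r: "equiv UNIV r"
    and translation_invariant: "\<And>x y b. (x, y) \<in> r \<Longrightarrow> (x + b, y + b) \<in> r"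
begin

lemma translation_invariant_equiv_iff: "(x, y) \<in> r \<longleftrightarrow> y - x \<in> r `` {0}"
proof
  assume "(x, y) \<in> r"
  from translation_invariant[OF this, of "- x"] show "y - x \<in> r `` {0}" by simp
next
  assume "y - x \<in> r `` {0}"
  from translation_invariant[of 0 "y - x" x] this show "(x, y) \<in> r" by simp
qed

lemma zero_mem_class_zero: "0 \<in> r `` {0}"
  using equiv_r by (auto elim: equivE simp: refl_on_def)

lemma class_zero_add: "a \<in> r `` {0} \<Longrightarrow> b \<in> r `` {0} \<Longrightarrow> a + b \<in> r `` {0}"
  using equiv_r translation_invariant_equiv_iff[of a "a + b"]
  by (auto elim!: equivE dest: transD)

lemma class_zero_uminus: "a \<in> r `` {0} \<Longrightarrow> - a \<in> r `` {0}"
  using equiv_r translation_invariant_equiv_iff[of a 0]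
  by (auto elim!: equivE dest: symD)

end

lemma of_nat_scaleR_mem:
  fixes K :: "'a::real_vector set"
  assumes "0 \<in> K" and "\<And>a b. a \<in> K \<Longrightarrow> b \<in> K \<Longrightarrow> a + b \<in> K" and "a \<in> K"
  shows "of_nat n *\<^sub>R a \<in> K"
  by (induction n) (use assms in \<open>auto simp: algebra_simps\<close>)

lemma eq_diff_of_equal_norms:
  fixes y :: "'a::euclidean_space"
  assumes "2 \<le> DIM('a)" and "norm y \<le> 2 * \<rho>"
  obtains a b where "norm a = \<rho>" "norm b = \<rho>" "y = a - b"
proof -
  obtain c where c: "c \<noteq> 0" "orthogonal y c"
    using orthogonal_to_vector_exists[OF assms(1)] by blast
  define s where "s = sqrt (\<rho>\<^sup>2 - (norm y / 2)\<^sup>2)"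
  define d where "d = (s / norm c) *\<^sub>R c"
  have "(norm y / 2)\<^sup>2 \<le> \<rho>\<^sup>2"
    using assms(2) by (intro power_mono) auto
  then have s2: "s\<^sup>2 = \<rho>\<^sup>2 - (norm y / 2)\<^sup>2"
    unfolding s_def by simp
  have "norm d = \<bar>s\<bar>"
    using c(1) by (simp add: d_def)
  have norm_half_plus_d: "norm (e *\<^sub>R y + d) = \<rho>" if "e\<^sup>2 = 1/4" for e
  proof -
    have "orthogonal (e *\<^sub>R y) d"
      using c(2) by (simp add: d_def orthogonal_clauses)
    then have "(norm (e *\<^sub>R y + d))\<^sup>2 = (norm y / 2)\<^sup>2 + s\<^sup>2"
      using \<open>norm d = \<bar>s\<bar>\<close> that by (simp add: norm_add_Pythagorean power_mult_distrib power_divide)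
    also have "\<dots> = \<rho>\<^sup>2"
      using s2 by simp
    finally have "(norm (e *\<^sub>R y + d))\<^sup>2 = \<rho>\<^sup>2" .
    moreover have "0 \<le> \<rho>"
      using assms(2) norm_ge_zero[of y] by linarith
    ultimately show ?thesis
      by (simp add: power2_eq_iff_nonneg)
  qed
  show ?thesis
  proof
    show "norm ((1/2) *\<^sub>R y + d) = \<rho>" and "norm ((- 1/2) *\<^sub>R y + d) = \<rho>"
      by (rule norm_half_plus_d; simp add: power_divide)+
    show "y = ((1/2) *\<^sub>R y + d) - ((- 1/2) *\<^sub>R y + d)"
      by (simp add: algebra_simps flip: scaleR_add_left)
  qed
qed

lemma rotation_invariant_subgroup_eq_UNIV:
  fixes K :: "'a::euclidean_space set"
  assumes "2 \<le> DIM('a)"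
    and zero: "0 \<in> K"
    and add: "\<And>a b. a \<in> K \<Longrightarrow> b \<in> K \<Longrightarrow> a + b \<in> K"
    and rotate: "\<And>a b. a \<in> K \<Longrightarrow> norm b = norm a \<Longrightarrow> b \<in> K"
    and "u \<in> K" "u \<noteq> 0"
  shows "K = UNIV"
proof -
  have small: "y \<in> K" if y_small: "norm y \<le> 2 * norm u" for y
  proof -
    obtain a b where "norm a = norm u" "norm b = norm u" "y = a - b"
      using eq_diff_of_equal_norms[OF assms(1) y_small] .
    then show ?thesis
      using add[of a "- b"] rotate \<open>u \<in> K\<close> by simp
  qed
  have "z \<in> K" for z
  proof -
    obtain n :: nat where n: "norm z / (2 * norm u) < n"
      using reals_Archimedean2 by blast
    then have "n > 0"
      by (metis divide_nonneg_nonneg norm_ge_zero mult_nonneg_nonneg zero_le_numeral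
          of_nat_0_less_iff order_le_less_trans)
    have "norm ((1 / n) *\<^sub>R z) \<le> 2 * norm u"
      using n \<open>n > 0\<close> \<open>u \<noteq> 0\<close> by (simp add: field_simps)
    then have "(1 / n) *\<^sub>R z \<in> K"
      by (rule small)
    then have "of_nat n *\<^sub>R (1 / n) *\<^sub>R z \<in> K"
      using of_nat_scaleR_mem[OF zero add] by blast
    then show "z \<in> K"
      using \<open>n > 0\<close> by simp
  qed
  then show ?thesis
    by auto
qed

lemma mat_1_in_SO3: "mat 1 \<in> SO3"
  by (simp add: SO3_def orthogonal_matrix_id det_I)

lemma SO3_maps_vectors_of_equal_norm:
  fixes a b :: "real^3"
  assumes "norm a = norm b"
  obtains S where "S \<in> SO3" "S *v a = b"
proof -
  obtain f where f: "orthogonal_transformation f" "det (matrix f) = 1" "f a = b"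
    using rotation_exists[OF _ assms] by auto
  then have "matrix f \<in> SO3"
    unfolding SO3_def by (simp add: orthogonal_transformation_matrix)
  moreover have "matrix f *v a = b"
    using f by (simp add: orthogonal_transformation_linear matrix_works)
  ultimately show ?thesis ..
qed

lemma boost_invariant_subgroup_eq:
  fixes K :: "((real^3) \<times> real) set"
  assumes zero: "0 \<in> K"
    and add: "\<And>a b. a \<in> K \<Longrightarrow> b \<in> K \<Longrightarrow> a + b \<in> K"
    and uminus: "\<And>a. a \<in> K \<Longrightarrow> - a \<in> K"
    and boost: "\<And>S w u t. S \<in> SO3 \<Longrightarrow> (u, t) \<in> K \<Longrightarrow> (S *v u + t *\<^sub>R w, t) \<in> K"
    and "p \<in> K" "p \<noteq> 0"
  shows "K = UNIV \<times> {t. (0, t) \<in> K}"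
proof -
  obtain u t where p: "p = (u, t)"
    by fastforce
  have spatial: "(z, 0) \<in> K" for z
  proof (cases "t = 0")
    case True
    let ?L = "{z. (z, 0) \<in> K}"
    have "?L = UNIV"
    proof (rule rotation_invariant_subgroup_eq_UNIV)
      show "a \<in> ?L \<Longrightarrow> norm b = norm a \<Longrightarrow> b \<in> ?L" for a b
        using boost[of _ a 0] SO3_maps_vectors_of_equal_norm[of a b] by force
      show "u \<in> ?L" "u \<noteq> 0"
        using \<open>p \<in> K\<close> \<open>p \<noteq> 0\<close> p True by (auto simp: zero_prod_def)
    qed (use zero add[of "(_, 0)" "(_, 0)"] in \<open>auto simp: zero_prod_def\<close>)
    then show ?thesis
      by auto
  next
    case False
    have "(u + z, t) \<in> K"
      using boost[OF mat_1_in_SO3, of u t "(1 / t) *\<^sub>R z"] \<open>p \<in> K\<close> p False by simp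
    from add[OF this uminus[of "(u, t)"]] show ?thesis
      using \<open>p \<in> K\<close> p by simp
  qed
  have "(a, s) \<in> K \<longleftrightarrow> (0, s) \<in> K" for a s
    using add[of "(a, s)" "(- a, 0)"] add[of "(0, s)" "(a, 0)"] spatial by auto
  then show ?thesis
    by auto
qed

lemma mem_rel_H_iff: "(x, y) \<in> rel_H H \<longleftrightarrow> snd y - snd x \<in> H"
proof -
  have "(x, y) \<in> rel_H H \<longleftrightarrow> y - x \<in> UNIV \<times> H"
    unfolding rel_H_def by (auto simp: image_iff algebra_simps)
  then show ?thesis
    by (simp add: mem_Times_iff)
qed

lemma galilei_map_mem: "S \<in> SO3 \<Longrightarrow> galilei_map S w b \<in> galilei_group"
  unfolding galilei_group_def by blast

lemma galilei_translation_mem: "(\<lambda>x. x + b) \<in> galilei_group"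
proof -
  have "galilei_map (mat 1) 0 b = (\<lambda>x. x + b)"
    by (simp add: galilei_map_def fun_eq_iff)
  then show ?thesis
    using galilei_map_mem[OF mat_1_in_SO3] by metis
qed

lemma galilei_boost_mem:
  assumes "S \<in> SO3"
  shows "(\<lambda>(u, t). (S *v u + t *\<^sub>R w, t)) \<in> galilei_group"
proof -
  have "galilei_map S w 0 = (\<lambda>(u, t). (S *v u + t *\<^sub>R w, t))"
    by (simp add: galilei_map_def fun_eq_iff)
  then show ?thesis
    using galilei_map_mem[OF assms] by metis
qed

lemma galilei_invariant_equiv_eq_rel_H:
  fixes r :: "(((real^3) \<times> real) \<times> ((real^3) \<times> real)) set"
  assumes "equiv UNIV r" and "invariant_rel galilei_group r" and "r \<noteq> Id"
  obtains H where "additive_subgroup H" "r = rel_H H"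
proof -
  have invariant: "\<And>x y g. (x, y) \<in> r \<Longrightarrow> g \<in> galilei_group \<Longrightarrow> (g x, g y) \<in> r"
    using assms(2) unfolding invariant_rel_def by blast
  note translation_invariant = invariant[OF _ galilei_translation_mem]
  note class_zero =
    zero_mem_class_zero[OF assms(1) translation_invariant]
    class_zero_add[OF assms(1) translation_invariant]
    class_zero_uminus[OF assms(1) translation_invariant]
  note r_iff = translation_invariant_equiv_iff[OF assms(1) translation_invariant]
  define H where "H = {t. (0, t) \<in> r `` {0}}"
  have "Id \<subseteq> r"
    using assms(1) by (auto elim: equivE simp: refl_on_def)
  with assms(3) obtain x y where "(x, y) \<in> r" "x \<noteq> y"
    by (metis pair_in_Id_conv subrelI subset_antisym)
  then have "y - x \<in> r `` {0}" "y - x \<noteq> 0"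
    using r_iff[of x y] by simp_all
  then have K: "r `` {0} = UNIV \<times> H"
    unfolding H_def
  proof (rule boost_invariant_subgroup_eq[rotated 4])
    show "S \<in> SO3 \<Longrightarrow> (u, t) \<in> r `` {0} \<Longrightarrow> (S *v u + t *\<^sub>R w, t) \<in> r `` {0}" for S w u t
      using invariant[OF _ galilei_boost_mem, of 0 "(u, t)" S w] by (simp add: zero_prod_def)
  qed (rule class_zero; assumption)+
  show ?thesis
  proof
    show "additive_subgroup H"
      using class_zero(1) class_zero(2)[of "(0, _)" "(0, _)"] class_zero(3)[of "(0, _)"]
      unfolding additive_subgroup_def H_def by (auto simp: zero_prod_def)
    have "(x, y) \<in> r \<longleftrightarrow> (x, y) \<in> rel_H H" for x y
      using K r_iff[of x y] by (simp add: mem_rel_H_iff mem_Times_iff)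
    then show "r = rel_H H"
      by auto
  qed
qed

lemma equiv_rel_H:
  assumes "additive_subgroup H"
  shows "equiv UNIV (rel_H H)"
proof (rule equivI)
  have H: "0 \<in> H" "\<And>a b. a \<in> H \<Longrightarrow> b \<in> H \<Longrightarrow> a + b \<in> H" "\<And>a. a \<in> H \<Longrightarrow> - a \<in> H"
    using assms unfolding additive_subgroup_def by auto
  show "refl (rel_H H)"
    using H(1) by (simp add: refl_on_def mem_rel_H_iff)
  show "sym (rel_H H)"
    using H(3) by (fastforce simp: sym_def mem_rel_H_iff)
  show "trans (rel_H H)"
  proof (rule transI)
    fix x y z
    assume "(x, y) \<in> rel_H H" "(y, z) \<in> rel_H H"
    then have "(snd y - snd x) + (snd z - snd y) \<in> H"
      by (intro H(2)) (simp_all add: mem_rel_H_iff)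
    then show "(x, z) \<in> rel_H H"
      by (simp add: mem_rel_H_iff)
  qed
  show "rel_H H \<subseteq> UNIV \<times> UNIV"
    by simp
qed

lemma invariant_rel_H: "invariant_rel galilei_group (rel_H H)"
  by (auto simp: invariant_rel_def galilei_group_def galilei_map_def mem_rel_H_iff)

lemma trivial_rel_H_iff: "trivial_rel (rel_H H) \<longleftrightarrow> H = UNIV"
proof -
  have "rel_H H \<noteq> Id"
  proof
    assume "rel_H H = Id"
    then have "((0, 0), (0, 0)) \<in> rel_H H" "((0, 0), (1, 0)) \<notin> rel_H H"
      by auto
    then show False
      by (simp add: mem_rel_H_iff)
  qed
  moreover have "rel_H H = UNIV \<longleftrightarrow> H = UNIV"
  proof
    assume "rel_H H = UNIV"
    then have "((0, 0), (0, t)) \<in> rel_H H" for t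
      by simp
    then show "H = UNIV"
      by (auto simp: mem_rel_H_iff)
  qed (auto simp: mem_rel_H_iff)
  ultimately show ?thesis
    unfolding trivial_rel_def by blast
qed

theorem theorem3p6:
  fixes r :: "(((real^3) \<times> real) \<times> ((real^3) \<times> real)) set"
  shows "(equiv UNIV r \<and> invariant_rel galilei_group r \<and> \<not> trivial_rel r) \<longleftrightarrow>
         (\<exists>H. additive_subgroup H \<and> H \<noteq> UNIV \<and> r = rel_H H)"
proof
  assume r: "equiv UNIV r \<and> invariant_rel galilei_group r \<and> \<not> trivial_rel r"
  then obtain H where "additive_subgroup H" "r = rel_H H"
    by (auto simp: trivial_rel_def elim: galilei_invariant_equiv_eq_rel_H)
  with r show "\<exists>H. additive_subgroup H \<and> H \<noteq> UNIV \<and> r = rel_H H"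
    using trivial_rel_H_iff by blast
next
  assume "\<exists>H. additive_subgroup H \<and> H \<noteq> UNIV \<and> r = rel_H H"
  then show "equiv UNIV r \<and> invariant_rel galilei_group r \<and> \<not> trivial_rel r"
    using equiv_rel_H invariant_rel_H trivial_rel_H_iff by blast
qed

end
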